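(* Let $(u,v)\in F^2$ with $(u,v)\sim_{AC}\mathrm{AK}(3)$, where $\mathrm{AK}(3)=(xyxy^{-1}x^{-1}y^{-1},\ x^3y^{-4})$. Then $(\varphi(u),\varphi(v))\sim_{AC}\mathrm{AK}(3)$ for every $\varphi\in\mathrm{Aut}(F)$.
   Context: $F=F(x,y)$ is the free group on $\{x,y\}$. $\mathrm{AK}(3)$ is the pair corresponding to the presentation $\langle x,y\mid xyx=yxy,\ x^3=y^4\rangle$. The Andrews–Curtis (AC) moves on a pair $(r_1,r_2)\in F^2$ are: replace $r_i$ by $r_ir_j$ ($i\ne j$); replace $r_i$ by $r_i^{-1}$; replace $r_i$ by $w^{-1}r_iw$ for some $w\in F$. Two pairs are AC-equivalent, $\sim_{AC}$, if one can be obtained from the other by a finite sequence of AC-moves. *)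

theory Defs
  imports "HOL-Algebra.Group"
begin

text \<open>The free group F = F(x,y), realised as freely reduced words over the
letters x, y and their inverses.  A letter is a pair (generator, inverted?).\<close>

datatype gen = X | Y

type_synonym letter = "gen \<times> bool"
type_synonym word = "letter list"

definition inverse_letters :: "letter \<Rightarrow> letter \<Rightarrow> bool" where
  "inverse_letters a b \<longleftrightarrow> fst a = fst b \<and> snd a \<noteq> snd b"

definition reduced :: "word \<Rightarrow> bool" where
  "reduced w \<longleftrightarrow> (\<forall>i. Suc i < length w \<longrightarrow> \<not> inverse_letters (w ! i) (w ! Suc i))"

fun push :: "letter \<Rightarrow> word \<Rightarrow> word" where
  "push a [] = [a]"
| "push a (b # bs) = (if inverse_letters a b then bs else a # b # bs)"

definition reduce :: "word \<Rightarrow> word" where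
  "reduce w = foldr push w []"

definition FG :: "word monoid" where
  "FG = \<lparr>carrier = {w. reduced w}, mult = (\<lambda>u v. reduce (u @ v)), one = []\<rparr>"

definition winv :: "word \<Rightarrow> word" where
  "winv w = rev (map (\<lambda>(g, b). (g, \<not> b)) w)"

definition wmult :: "word \<Rightarrow> word \<Rightarrow> word" where
  "wmult u v = reduce (u @ v)"

inductive ac_move :: "word \<times> word \<Rightarrow> word \<times> word \<Rightarrow> bool" where
  mult1: "ac_move (r1, r2) (wmult r1 r2, r2)"
| mult2: "ac_move (r1, r2) (r1, wmult r2 r1)"
| inv1:  "ac_move (r1, r2) (winv r1, r2)"
| inv2:  "ac_move (r1, r2) (r1, winv r2)"
| conj1: "reduced w \<Longrightarrow> ac_move (r1, r2) (wmult (wmult (winv w) r1) w, r2)"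
| conj2: "reduced w \<Longrightarrow> ac_move (r1, r2) (r1, wmult (wmult (winv w) r2) w)"

definition ac_equiv :: "word \<times> word \<Rightarrow> word \<times> word \<Rightarrow> bool" where
  "ac_equiv p q \<longleftrightarrow> ac_move\<^sup>*\<^sup>* p q"

abbreviation "lx \<equiv> (X, False)"
abbreviation "ly \<equiv> (Y, False)"
abbreviation "lxi \<equiv> (X, True)"
abbreviation "lyi \<equiv> (Y, True)"

definition AK3 :: "word \<times> word" where
  "AK3 = ([lx, ly, lx, lyi, lxi, lyi], [lx, lx, lx, lyi, lyi, lyi, lyi])"

end

theory Submission
  imports Defs
begin

text \<open>A pair \<open>(a, b)\<close> of words is identified with the endomorphism \<open>x \<mapsto> a, y \<mapsto> b\<close> of the
  free group. Such a substitution maps AC-moves to AC-moves, so \<open>(u, v) \<sim>\<^sub>A\<^sub>C AK(3)\<close> gives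
  \<open>(\<phi> u, \<phi> v) \<sim>\<^sub>A\<^sub>C \<phi>(AK(3))\<close>, and it remains to show \<open>\<phi>(AK(3)) \<sim>\<^sub>A\<^sub>C AK(3)\<close> for every
  automorphism \<open>\<phi>\<close>. The pairs with this property are closed under composition and under
  conjugation, and explicit AC-sequences show that they contain the swap \<open>x \<leftrightarrow> y\<close>, the inversion
  \<open>y \<mapsto> y\<inverse>\<close> and the transvection \<open>x \<mapsto> x y\<inverse>\<close>; hence all signed permutations and all elementary
  transvections. Nielsen's reduction argument finishes the proof: a generating pair that is not
  Nielsen-reduced becomes shorter after a transvection followed by a conjugation, and a
  Nielsen-reduced generating pair is a signed permutation of \<open>(x, y)\<close>.\<close>

section \<open>Reduced words\<close>

definition inv_letter :: "letter \<Rightarrow> letter" where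
  "inv_letter l = (fst l, \<not> snd l)"

lemma inv_letter_inv_letter [simp]: "inv_letter (inv_letter l) = l"
  by (simp add: inv_letter_def)

lemma inverse_letters_iff: "inverse_letters a b \<longleftrightarrow> b = inv_letter a"
  by (cases a; cases b) (auto simp: inverse_letters_def inv_letter_def)

lemma inverse_letters_sym: "inverse_letters a b \<longleftrightarrow> inverse_letters b a"
  by (auto simp: inverse_letters_def)

lemma not_inverse_letters_self [simp]: "\<not> inverse_letters l l"
  by (simp add: inverse_letters_def)

lemma inverse_letters_inv_letter [simp]:
  "inverse_letters (inv_letter a) (inv_letter b) \<longleftrightarrow> inverse_letters a b"
  by (auto simp: inverse_letters_def inv_letter_def)

lemma letter_cases [case_names x xi y yi]:
  obtains "l = lx" | "l = lxi" | "l = ly" | "l = lyi"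
  by (cases l) (metis (full_types) gen.exhaust)

lemma eq_if_same_gen_not_inverse: "fst a = fst b \<Longrightarrow> \<not> inverse_letters a b \<Longrightarrow> a = b"
  by (auto simp: inverse_letters_def prod_eq_iff)

lemma gen_eq_if_both_differ: "(g1::gen) \<noteq> g \<Longrightarrow> g2 \<noteq> g \<Longrightarrow> g1 = g2"
  by (cases g1; cases g2; cases g) auto

lemma reduced_Nil [simp]: "reduced []"
  and reduced_single [simp]: "reduced [a]"
  by (simp_all add: reduced_def)

lemma reduced_Cons_Cons [simp]:
  "reduced (a # b # w) \<longleftrightarrow> \<not> inverse_letters a b \<and> reduced (b # w)"
  unfolding reduced_def by (auto simp: nth_Cons split: nat.splits)

lemma reduced_ConsD: "reduced (a # w) \<Longrightarrow> reduced w"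
  by (cases w) auto

lemma reduced_appendD1: "reduced (u @ v) \<Longrightarrow> reduced u"
  unfolding reduced_def by (metis length_append nth_append trans_less_add1 Suc_lessD)

lemma reduced_appendD2: "reduced (u @ v) \<Longrightarrow> reduced v"
  by (induction u) (auto dest: reduced_ConsD)

lemma reduced_push: "reduced w \<Longrightarrow> reduced (push a w)"
  by (cases w) (auto dest: reduced_ConsD)

lemma reduced_foldr_push: "reduced w \<Longrightarrow> reduced (foldr push u w)"
  by (induction u) (auto intro: reduced_push)

lemma reduced_reduce [simp]: "reduced (reduce w)"
  unfolding reduce_def by (simp add: reduced_foldr_push)

lemma push_reduced_Cons: "reduced (a # w) \<Longrightarrow> push a w = a # w"
  by (cases w) auto

lemma reduce_Cons: "reduce (a # w) = push a (reduce w)"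
  by (simp add: reduce_def)

lemma reduce_reduced [simp]: "reduced w \<Longrightarrow> reduce w = w"
proof (induction w)
  case (Cons a w)
  then show ?case
    by (simp add: reduce_Cons push_reduced_Cons reduced_ConsD)
qed (simp add: reduce_def)

lemma reduce_append: "reduce (u @ v) = foldr push u (reduce v)"
  by (simp add: reduce_def)

lemma push_push_inv: "reduced w \<Longrightarrow> push a (push (inv_letter a) w) = w"
  by (cases w) (auto simp: inverse_letters_iff push_reduced_Cons)

lemma foldr_push_reduce: "reduced z \<Longrightarrow> foldr push (reduce u) z = foldr push u z"
proof (induction u)
  case (Cons a u)
  have "foldr push (push a (reduce u)) z = push a (foldr push (reduce u) z)"
  proof (cases "reduce u")
    case (Cons b r)
    moreover have "reduced (foldr push r z)"
      using Cons.prems reduced_reduce[of u] by (simp add: Cons reduced_foldr_push reduced_ConsD)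
    ultimately show ?thesis
      by (auto simp: inverse_letters_iff push_push_inv)
  qed simp
  then show ?case
    using Cons by (simp add: reduce_Cons)
qed (simp add: reduce_def)

lemma reduce_reduce_append [simp]: "reduce (reduce u @ v) = reduce (u @ v)"
  by (simp add: reduce_append foldr_push_reduce)

lemma reduce_append_reduce [simp]: "reduce (u @ reduce v) = reduce (u @ v)"
  by (simp add: reduce_append)

lemma reduced_wmult [simp]: "reduced (wmult u v)"
  by (simp add: wmult_def)

lemma wmult_assoc: "wmult (wmult u v) w = wmult u (wmult v w)"
  unfolding wmult_def by (metis append_assoc reduce_reduce_append reduce_append_reduce)

lemma wmult_Nil [simp]: "wmult [] w = reduce w" "wmult w [] = reduce w"
  by (simp_all add: wmult_def)

lemma wmult_reduce [simp]: "wmult (reduce u) v = wmult u v" "wmult u (reduce v) = wmult u v"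
  by (simp_all add: wmult_def)

lemma winv_Nil [simp]: "winv [] = []"
  by (simp add: winv_def)

lemma winv_Cons: "winv (a # w) = winv w @ [inv_letter a]"
  by (cases a) (simp add: winv_def inv_letter_def)

lemma winv_single [simp]: "winv [a] = [inv_letter a]"
  by (simp add: winv_Cons)

lemma length_winv [simp]: "length (winv w) = length w"
  by (simp add: winv_def)

lemma winv_winv [simp]: "winv (winv w) = w"
  unfolding winv_def by (induction w) auto

lemma winv_nth: "i < length w \<Longrightarrow> winv w ! i = inv_letter (w ! (length w - Suc i))"
  by (simp add: winv_def rev_nth inv_letter_def split: prod.splits)

lemma reduced_winv [simp]: "reduced (winv w) \<longleftrightarrow> reduced w"
proof -
  have "reduced (winv w)" if "reduced w" for w
    unfolding reduced_def
  proof (intro allI impI)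
    fix i assume i: "Suc i < length (winv w)"
    then have "\<not> inverse_letters (w ! (length w - Suc (Suc i))) (w ! Suc (length w - Suc (Suc i)))"
      using that by (simp add: reduced_def)
    moreover have "Suc (length w - Suc (Suc i)) = length w - Suc i"
      using i by simp
    ultimately show "\<not> inverse_letters (winv w ! i) (winv w ! Suc i)"
      using i by (simp add: winv_nth inverse_letters_sym)
  qed
  then show ?thesis
    by (metis winv_winv)
qed

lemma wmult_winv [simp]: "wmult w (winv w) = []" "wmult (winv w) w = []"
proof -
  show "wmult w (winv w) = []" for w
  proof (induction w)
    case (Cons a w)
    have "reduce (w @ winv w @ [inv_letter a]) = reduce (reduce (w @ winv w) @ [inv_letter a])"
      by (metis append_assoc reduce_reduce_append)
    also have "\<dots> = [inv_letter a]"
      using Cons by (simp add: wmult_def)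
    finally show ?case
      by (simp add: wmult_def winv_Cons reduce_Cons inverse_letters_iff)
  qed simp
  from this[of "winv w"] show "wmult (winv w) w = []"
    by simp
qed

lemma wmult_cancel [simp]:
  "wmult u (wmult (winv u) z) = reduce z" "wmult (winv u) (wmult u z) = reduce z"
  "wmult (wmult z u) (winv u) = reduce z" "wmult (wmult z (winv u)) u = reduce z"
  by (metis wmult_assoc wmult_winv wmult_Nil)+

lemma winv_wmult: "winv (wmult u v) = wmult (winv v) (winv u)"
proof -
  have "wmult (winv (wmult u v)) (wmult u v) = wmult (wmult (winv v) (winv u)) (wmult u v)"
    by (simp add: wmult_assoc)
  then show ?thesis
    by (metis reduce_reduced reduced_wmult reduced_winv wmult_cancel(3))
qed

lemma reduce_winv: "reduce (winv w) = winv (reduce w)"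
  using winv_wmult[of w "[]"] by simp

lemma group_FG: "group FG"
proof (rule groupI)
  fix x y z
  assume "x \<in> carrier FG" "y \<in> carrier FG" "z \<in> carrier FG"
  then show "x \<otimes>\<^bsub>FG\<^esub> y \<in> carrier FG"
    and "x \<otimes>\<^bsub>FG\<^esub> y \<otimes>\<^bsub>FG\<^esub> z = x \<otimes>\<^bsub>FG\<^esub> (y \<otimes>\<^bsub>FG\<^esub> z)"
    and "\<one>\<^bsub>FG\<^esub> \<otimes>\<^bsub>FG\<^esub> x = x"
    using wmult_assoc[unfolded wmult_def] by (auto simp: FG_def)
next
  fix x assume "x \<in> carrier FG"
  then show "\<exists>y\<in>carrier FG. y \<otimes>\<^bsub>FG\<^esub> x = \<one>\<^bsub>FG\<^esub>"
    using wmult_winv(2)[of x, unfolded wmult_def] by (intro bexI[of _ "winv x"]) (auto simp: FG_def)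
qed (simp add: FG_def)

lemma FG_simps: "carrier FG = {w. reduced w}" "mult FG = wmult" "one FG = []"
  by (auto simp: FG_def wmult_def[abs_def])

lemma inv_FG: "reduced w \<Longrightarrow> inv\<^bsub>FG\<^esub> w = winv w"
  using group.inv_equality[OF group_FG, of "winv w" w] by (simp add: FG_simps)

fun inverse_prefix_length :: "word \<Rightarrow> word \<Rightarrow> nat" where
  "inverse_prefix_length (a # as) (b # bs) =
     (if inverse_letters a b then Suc (inverse_prefix_length as bs) else 0)"
| "inverse_prefix_length _ _ = 0"

text \<open>The number of letters cancelled at each side when the reduced product of \<open>u\<close> and \<open>v\<close>
  is formed.\<close>
definition cancellation :: "word \<Rightarrow> word \<Rightarrow> nat" where
  "cancellation u v = inverse_prefix_length (rev u) v"

lemma inverse_prefix_length_le: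
  "inverse_prefix_length xs ys \<le> length xs" "inverse_prefix_length xs ys \<le> length ys"
  by (induction xs ys rule: inverse_prefix_length.induct) auto

lemma inverse_prefix_length_nth:
  "j < inverse_prefix_length xs ys \<Longrightarrow> inverse_letters (xs ! j) (ys ! j)"
proof (induction xs ys arbitrary: j rule: inverse_prefix_length.induct)
  case (1 x xs y ys)
  then show ?case
    by (cases j) (auto split: if_splits)
qed auto

lemma inverse_prefix_length_take:
  "inverse_prefix_length (take m xs) ys = min m (inverse_prefix_length xs ys)"
  "inverse_prefix_length xs (take m ys) = min m (inverse_prefix_length xs ys)"
  by (induction xs ys arbitrary: m rule: inverse_prefix_length.induct) (auto simp: take_Cons')

lemma inverse_prefix_length_append:
  "inverse_prefix_length xs ys < length ys \<Longrightarrow>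
   inverse_prefix_length xs (ys @ zs) = inverse_prefix_length xs ys"
  by (induction xs ys rule: inverse_prefix_length.induct) (auto split: if_splits)

lemma cancellation_le: "cancellation u v \<le> length u" "cancellation u v \<le> length v"
  using inverse_prefix_length_le[of "rev u" v] by (simp_all add: cancellation_def)

lemma cancellation_nth:
  "j < cancellation u v \<Longrightarrow> inverse_letters (u ! (length u - Suc j)) (v ! j)"
  using inverse_prefix_length_nth[of j "rev u" v] cancellation_le[of u v]
  by (simp add: cancellation_def rev_nth)

lemma cancellation_take: "cancellation u (take m v) = min m (cancellation u v)"
  by (simp add: cancellation_def inverse_prefix_length_take)

lemma cancellation_append: "cancellation u v < length v \<Longrightarrow> cancellation u (v @ w) = cancellation u v"
  by (simp add: cancellation_def inverse_prefix_length_append)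

lemma cancellation_reduced_snoc: "reduced (u @ [a]) \<Longrightarrow> cancellation u (a # v) = 0"
proof (cases u rule: rev_cases)
  case (snoc u' c)
  assume "reduced (u @ [a])"
  then have "\<not> inverse_letters c a"
    using snoc unfolding reduced_def by (auto simp: nth_append dest: spec[of _ "length u'"])
  then show ?thesis
    using snoc by (simp add: cancellation_def)
qed (simp add: cancellation_def)

lemma foldr_push_cancellation:
  assumes "reduced u" "reduced v"
  shows "foldr push u v = take (length u - cancellation u v) u @ drop (cancellation u v) v"
  using assms
proof (induction u arbitrary: v rule: rev_induct)
  case (snoc a u)
  have ru: "reduced u"
    using snoc.prems(1) by (rule reduced_appendD1)
  show ?case
  proof (cases "v \<noteq> [] \<and> inverse_letters a (hd v)")
    case True
    then obtain v' where v: "v = inv_letter a # v'"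
      by (cases v) (auto simp: inverse_letters_iff)
    then have "foldr push (u @ [a]) v = foldr push u v'"
      by (simp add: inverse_letters_iff)
    also have "\<dots> = take (length u - cancellation u v') u @ drop (cancellation u v') v'"
      using snoc ru v by (simp add: reduced_ConsD)
    finally show ?thesis
      using v by (simp add: cancellation_def inverse_letters_iff cancellation_le)
  next
    case False
    then have av: "reduced (a # v)" and push: "push a v = a # v"
      using snoc.prems(2) by (cases v; auto)+
    have "foldr push (u @ [a]) v = foldr push u (a # v)"
      using push by simp
    also have "\<dots> = take (length u - cancellation u (a # v)) u
        @ drop (cancellation u (a # v)) (a # v)"
      using snoc.IH ru av by simp
    finally show ?thesis
      using False cancellation_reduced_snoc[OF snoc.prems(1)]
      by (cases v) (auto simp: cancellation_def)
  qed
qed (simp add: cancellation_def)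

lemma wmult_cancellation:
  assumes "reduced u" "reduced v"
  shows "wmult u v = take (length u - cancellation u v) u @ drop (cancellation u v) v"
  using assms by (simp add: wmult_def reduce_append foldr_push_cancellation)

lemma length_wmult:
  assumes "reduced u" "reduced v"
  shows "length (wmult u v) = length u + length v - 2 * cancellation u v"
  using wmult_cancellation[OF assms] cancellation_le[of u v] by simp

text \<open>Otherwise the two letters meeting in the middle would be inverse neighbours, or the middle
  letter would be its own inverse.\<close>
lemma cancellation_self_less:
  assumes r: "reduced t" and ne: "t \<noteq> []"
  shows "2 * cancellation t t < length t"
proof (rule ccontr)
  let ?n = "length t" and ?k = "cancellation t t"
  assume "\<not> 2 * ?k < ?n"
  then have k: "?n \<le> 2 * ?k"
    by simp
  show False
  proof (cases "even ?n")
    case True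
    then obtain m where m: "?n = 2 * m"
      by blast
    with ne obtain j where j: "m = Suc j"
      by (cases m) auto
    have "inverse_letters (t ! Suc j) (t ! j)"
      using cancellation_nth[of j t t] k m j by (simp add: numeral_2_eq_2)
    then have "inverse_letters (t ! j) (t ! Suc j)"
      by (simp add: inverse_letters_sym)
    moreover have "Suc j < ?n"
      using m j by simp
    ultimately show False
      using r unfolding reduced_def by blast
  next
    case False
    then obtain m where m: "?n = 2 * m + 1"
      by (metis oddE)
    then have "inverse_letters (t ! m) (t ! m)"
      using cancellation_nth[of m t t] k by simp
    then show False
      by simp
  qed
qed

section \<open>Substitutions\<close>

fun subst_letter :: "word \<times> word \<Rightarrow> letter \<Rightarrow> word" where
  "subst_letter \<phi> (X, False) = fst \<phi>"
| "subst_letter \<phi> (X, True) = winv (fst \<phi>)"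
| "subst_letter \<phi> (Y, False) = snd \<phi>"
| "subst_letter \<phi> (Y, True) = winv (snd \<phi>)"

definition subst :: "word \<times> word \<Rightarrow> word \<Rightarrow> word" where
  "subst \<phi> w = foldr (\<lambda>l acc. wmult (subst_letter \<phi> l) acc) w []"

definition subst_pair :: "word \<times> word \<Rightarrow> word \<times> word \<Rightarrow> word \<times> word" where
  "subst_pair \<phi> p = (subst \<phi> (fst p), subst \<phi> (snd p))"

lemma subst_Nil [simp]: "subst \<phi> [] = []"
  by (simp add: subst_def)

lemma subst_Cons: "subst \<phi> (l # w) = wmult (subst_letter \<phi> l) (subst \<phi> w)"
  by (simp add: subst_def)

lemma reduced_subst [simp]: "reduced (subst \<phi> w)"
  by (cases w) (simp_all add: subst_Cons)

lemma subst_letter_inv_letter: "subst_letter \<phi> (inv_letter l) = winv (subst_letter \<phi> l)"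
  by (cases l rule: letter_cases) (simp_all add: inv_letter_def)

lemma subst_single: "subst \<phi> [l] = reduce (subst_letter \<phi> l)"
  by (simp add: subst_Cons)

lemma subst_append: "subst \<phi> (u @ v) = wmult (subst \<phi> u) (subst \<phi> v)"
  by (induction u) (simp_all add: subst_Cons wmult_assoc)

lemma subst_reduce: "subst \<phi> (reduce w) = subst \<phi> w"
proof (induction w)
  case (Cons l w)
  have "subst \<phi> (push l z) = subst \<phi> (l # z)" for z
    by (cases z) (auto simp: subst_Cons inverse_letters_iff subst_letter_inv_letter)
  then show ?case
    using Cons by (simp add: reduce_Cons subst_Cons)
qed (simp add: reduce_def)

lemma subst_wmult: "subst \<phi> (wmult u v) = wmult (subst \<phi> u) (subst \<phi> v)"
  by (simp add: wmult_def subst_reduce subst_append)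

lemma subst_winv: "subst \<phi> (winv w) = winv (subst \<phi> w)"
  by (induction w) (simp_all add: winv_Cons subst_append subst_single subst_Cons
      subst_letter_inv_letter winv_wmult flip: reduce_winv)

lemma subst_subst: "subst \<phi> (subst \<psi> w) = subst (subst_pair \<phi> \<psi>) w"
proof (induction w)
  case (Cons l w)
  have "subst \<phi> (subst_letter \<psi> l) = subst_letter (subst_pair \<phi> \<psi>) l"
    by (cases l rule: letter_cases) (simp_all add: subst_pair_def subst_winv)
  with Cons show ?case
    by (simp add: subst_Cons subst_wmult)
qed simp

lemma subst_pair_subst_pair: "subst_pair \<phi> (subst_pair \<psi> p) = subst_pair (subst_pair \<phi> \<psi>) p"
  by (simp add: subst_pair_def subst_subst)

lemma subst_hom_FG:
  assumes "f \<in> hom FG FG" and "reduced w"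
  shows "f w = subst (f [lx], f [ly]) w"
  using assms(2)
proof (induction w)
  case Nil
  show ?case
    using group_hom.hom_one[of FG FG f] assms(1) group_FG
    by (simp add: group_hom_def group_hom_axioms_def FG_simps)
next
  case (Cons l w)
  have hom: "group_hom FG FG f"
    using assms(1) group_FG by (simp add: group_hom_def group_hom_axioms_def)
  have closed: "reduced (f u)" if "reduced u" for u
    using group_hom.hom_closed[OF hom] that by (simp add: FG_simps)
  have inv: "f (winv u) = winv (f u)" if "reduced u" for u
    using group_hom.hom_inv[OF hom] that by (simp add: FG_simps inv_FG closed)
  have letter: "f [l] = subst_letter (f [lx], f [ly]) l"
    using inv[of "[lx]"] inv[of "[ly]"]
    by (cases l rule: letter_cases) (simp_all add: inv_letter_def)
  have "f (wmult [l] w) = wmult (f [l]) (f w)"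
    using group_hom.hom_mult[OF hom] Cons.prems by (simp add: FG_simps reduced_ConsD)
  moreover have "wmult [l] w = l # w"
    using Cons.prems by (simp add: wmult_def)
  ultimately have "f (l # w) = wmult (f [l]) (f w)"
    by simp
  then show ?case
    using Cons letter by (simp add: subst_Cons reduced_ConsD)
qed

definition conjw :: "word \<Rightarrow> word \<Rightarrow> word" where
  "conjw p r = wmult (wmult (winv p) r) p"

definition conj_pair :: "word \<Rightarrow> word \<times> word \<Rightarrow> word \<times> word" where
  "conj_pair p q = (conjw p (fst q), conjw p (snd q))"

lemma reduced_conjw [simp]: "reduced (conjw p r)"
  by (simp add: conjw_def)

lemma conjw_Nil [simp]: "conjw p [] = []"
  by (simp add: conjw_def)

lemma conjw_Nil_left [simp]: "conjw [] r = reduce r"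
  by (simp add: conjw_def)

lemma conjw_winv: "conjw p (winv r) = winv (conjw p r)"
  by (simp add: conjw_def winv_wmult wmult_assoc)

lemma conjw_wmult: "conjw p (wmult r s) = wmult (conjw p r) (conjw p s)"
  by (simp add: conjw_def wmult_assoc)

lemma conjw_conjw_winv [simp]:
  "conjw p (conjw (winv p) r) = reduce r" "conjw (winv p) (conjw p r) = reduce r"
  by (simp_all add: conjw_def wmult_assoc)

lemma subst_conj_pair: "subst (conj_pair p \<phi>) w = conjw p (subst \<phi> w)"
proof (induction w)
  case (Cons l w)
  have "subst_letter (conj_pair p \<phi>) l = conjw p (subst_letter \<phi> l)"
    by (cases l rule: letter_cases) (simp_all add: conj_pair_def conjw_winv)
  with Cons show ?case
    by (simp add: subst_Cons conjw_wmult)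
qed simp

lemma subst_pair_conj_pair: "subst_pair (conj_pair p \<phi>) q = conj_pair p (subst_pair \<phi> q)"
  unfolding subst_pair_def subst_conj_pair by (simp add: conj_pair_def)

lemma ac_equiv_refl [simp]: "ac_equiv p p"
  by (simp add: ac_equiv_def)

lemma ac_equiv_trans [trans]: "ac_equiv p q \<Longrightarrow> ac_equiv q r \<Longrightarrow> ac_equiv p r"
  by (simp add: ac_equiv_def)

lemma ac_equiv_move_trans [trans]: "ac_move p q \<Longrightarrow> ac_equiv q r \<Longrightarrow> ac_equiv p r"
  by (simp add: ac_equiv_def converse_rtranclp_into_rtranclp)

lemma ac_move_subst_pair: "ac_move p q \<Longrightarrow> ac_move (subst_pair \<phi> p) (subst_pair \<phi> q)"
  by (induction rule: ac_move.induct)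
     (simp_all add: subst_pair_def subst_wmult subst_winv ac_move.intros)

lemma ac_equiv_subst_pair: "ac_equiv p q \<Longrightarrow> ac_equiv (subst_pair \<phi> p) (subst_pair \<phi> q)"
  unfolding ac_equiv_def
  by (induction rule: rtranclp_induct) (auto intro: ac_move_subst_pair rtranclp.intros)

lemma ac_move_conjw:
  "ac_move (r1, r2) (conjw p r1, r2)" "ac_move (r1, r2) (r1, conjw p r2)"
  using ac_move.conj1[of "reduce p"] ac_move.conj2[of "reduce p"]
  by (simp_all add: conjw_def flip: reduce_winv)

lemma ac_equiv_conj_pair: "ac_equiv q (conj_pair p q)"
proof (cases q)
  case (Pair r1 r2)
  have "ac_move (r1, r2) (conjw p r1, r2)" "ac_move (conjw p r1, r2) (conjw p r1, conjw p r2)"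
    by (rule ac_move_conjw)+
  then show ?thesis
    using Pair unfolding ac_equiv_def conj_pair_def
    by (simp add: converse_rtranclp_into_rtranclp)
qed

lemma ac_equiv_conj_pair_back:
  "reduced (fst q) \<Longrightarrow> reduced (snd q) \<Longrightarrow> ac_equiv (conj_pair p q) q"
  using ac_equiv_conj_pair[of "conj_pair p q" "winv p"] by (simp add: conj_pair_def)

datatype ac_op = Mult1 | Mult2 | Inv1 | Inv2 | Conj1 word | Conj2 word

fun ac_op_apply :: "ac_op \<Rightarrow> word \<times> word \<Rightarrow> word \<times> word" where
  "ac_op_apply Mult1 (r1, r2) = (wmult r1 r2, r2)"
| "ac_op_apply Mult2 (r1, r2) = (r1, wmult r2 r1)"
| "ac_op_apply Inv1 (r1, r2) = (winv r1, r2)"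
| "ac_op_apply Inv2 (r1, r2) = (r1, winv r2)"
| "ac_op_apply (Conj1 p) (r1, r2) = (conjw p r1, r2)"
| "ac_op_apply (Conj2 p) (r1, r2) = (r1, conjw p r2)"

lemma ac_move_ac_op_apply: "ac_move q (ac_op_apply op q)"
  by (cases q; cases op) (simp_all add: ac_move.intros ac_move_conjw)

lemma ac_equiv_fold_ac_op_apply: "ac_equiv q (fold ac_op_apply ops q)"
proof (induction ops arbitrary: q)
  case (Cons op ops)
  show ?case
    using ac_equiv_move_trans[OF ac_move_ac_op_apply Cons.IH] by simp
qed simp

section \<open>Pairs preserving the AC-class of AK(3)\<close>

definition preserves_AK3 :: "word \<times> word \<Rightarrow> bool" where
  "preserves_AK3 \<phi> \<longleftrightarrow> ac_equiv (subst_pair \<phi> AK3) AK3"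

lemma preserves_AK3_if_ac_ops:
  "fold ac_op_apply ops (subst_pair \<phi> AK3) = AK3 \<Longrightarrow> preserves_AK3 \<phi>"
  by (metis ac_equiv_fold_ac_op_apply preserves_AK3_def)

lemma preserves_AK3_subst_pair:
  assumes "preserves_AK3 \<phi>" and "preserves_AK3 \<psi>"
  shows "preserves_AK3 (subst_pair \<phi> \<psi>)"
proof -
  have "ac_equiv (subst_pair \<phi> (subst_pair \<psi> AK3)) (subst_pair \<phi> AK3)"
    using assms(2) by (simp add: preserves_AK3_def ac_equiv_subst_pair)
  also have "ac_equiv (subst_pair \<phi> AK3) AK3"
    using assms(1) by (simp add: preserves_AK3_def)
  finally show ?thesis
    by (simp add: preserves_AK3_def subst_pair_subst_pair)
qed

lemma preserves_AK3_conj_pair: "preserves_AK3 (conj_pair p \<phi>) \<longleftrightarrow> preserves_AK3 \<phi>"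
proof -
  have "ac_equiv (conj_pair p (subst_pair \<phi> AK3)) (subst_pair \<phi> AK3)"
    by (rule ac_equiv_conj_pair_back) (simp_all add: subst_pair_def)
  then show ?thesis
    unfolding preserves_AK3_def subst_pair_conj_pair
    by (meson ac_equiv_conj_pair ac_equiv_trans)
qed

lemmas word_computation_simps = AK3_def subst_pair_def subst_Cons conjw_def
  wmult_def reduce_def winv_def inverse_letters_def

lemma preserves_AK3_swap: "preserves_AK3 ([ly], [lx])"
  by (rule preserves_AK3_if_ac_ops[where ops =
        "[Inv1, Mult2, Conj2 [ly], Mult2, Conj2 [ly], Mult2, Conj2 [ly], Mult2, Conj2 [lxi],
          Mult2, Conj2 [lxi], Mult2, Conj2 [lxi], Mult2, Conj2 [ly, lx]]"])
     (simp add: word_computation_simps)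

lemma preserves_AK3_invert_y: "preserves_AK3 ([lx], [lyi])"
  by (rule preserves_AK3_if_ac_ops[where ops =
        "[Inv2, Conj1 [lx, lyi], Mult1, Conj1 [lx], Inv2, Mult2, Conj2 [lx, lx],
          Conj1 [ly, lxi, ly, lx, lyi, lyi, lyi, lyi, lyi, lxi], Mult1, Conj1 [lxi], Mult1,
          Conj1 [ly], Conj2 [lx], Mult2, Conj2 [ly, ly, ly, ly], Mult1, Conj1 [lxi, ly, ly],
          Inv1, Conj2 [ly, lxi], Mult2, Conj2 [ly, lx, lyi, lyi], Inv1, Conj1 [ly, lx, lyi, lyi],
          Mult1, Conj1 [lyi, lxi, ly, lx], Inv2, Conj1 [ly, lx, lyi, lyi, lx, ly], Mult1, Inv2,
          Conj1 [lxi, ly, lx, lyi, lx, lx], Mult1, Conj1 [lyi, lxi],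
          Conj1 [lxi, ly, lx, lyi, lx, lx, lx, ly, lxi, lxi], Mult1, Conj1 [lyi, lxi, ly, lx],
          Inv1, Conj2 [lx, ly, lxi, lxi], Mult2, Conj2 [lyi, lx], Inv1, Conj1 [lyi], Mult1,
          Conj1 [lx, lx], Mult2, Conj2 [ly], Conj2 [lx, ly, lxi, lyi, lx, lyi, lxi], Mult2,
          Conj2 [ly, lxi, ly], Mult2, Conj2 [ly, lxi], Inv1, Conj2 [lyi, lx], Mult2,
          Conj2 [lx, ly, lxi, ly, ly, lxi], Inv1, Inv2, Conj1 [lx, ly, lxi, ly], Mult1,
          Conj1 [ly], Inv2, Inv1, Conj2 [ly, ly], Mult2, Conj2 [lxi, lyi],
          Conj2 [lyi, lx, ly, lxi, ly, ly, ly, ly, lxi, lyi], Mult2, Conj2 [lxi, lyi, lx, ly],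
          Inv1, Conj1 [lxi, lyi], Inv2, Conj2 [lx, lx, lyi, lyi, lyi, lyi]]"])
     (simp add: word_computation_simps)

lemma preserves_AK3_x_to_x_inv_y: "preserves_AK3 ([lx, lyi], [ly])"
  by (rule preserves_AK3_if_ac_ops[where ops =
        "[Inv2, Conj1 [lx], Mult1, Conj1 [lx, lyi], Inv2, Mult2, Conj2 [lx, lyi, lx, lyi],
          Conj1 [lxi, lyi, lx, ly, ly, ly, ly, ly, lxi], Mult1, Conj1 [ly, lxi], Mult1,
          Conj2 [lx], Mult2, Conj2 [lyi, lyi, lyi, lyi], Inv1, Conj2 [lyi], Mult2,
          Conj2 [lxi, lyi], Inv1, Conj1 [lxi, lyi], Mult1, Conj1 [lyi, lyi, lx, ly, ly, ly, ly],
          Conj2 [lx], Mult2, Conj2 [ly], Conj2 [lx, lyi, lyi, lyi, lyi, lyi, lxi, ly, lx], Mult2,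
          Conj2 [ly], Conj1 [lxi, lyi], Conj2 [lx, lx, lyi, lyi, lyi, lyi]]"])
     (simp add: word_computation_simps)

lemma preserves_AK3_signed_permutation:
  assumes "fst l \<noteq> fst l'"
  shows "preserves_AK3 ([l], [l'])"
proof -
  have xy: "preserves_AK3 ([lx], [ly])"
    by (rule preserves_AK3_if_ac_ops[where ops = "[]"]) (simp add: word_computation_simps)
  note yx = preserves_AK3_swap and xY = preserves_AK3_invert_y
  have yX: "preserves_AK3 ([ly], [lxi])"
    using preserves_AK3_subst_pair[OF yx xY] by (simp add: word_computation_simps)
  have Yx: "preserves_AK3 ([lyi], [lx])"
    using preserves_AK3_subst_pair[OF xY yx] by (simp add: word_computation_simps)
  have Xy: "preserves_AK3 ([lxi], [ly])"
    using preserves_AK3_subst_pair[OF yx Yx] by (simp add: word_computation_simps)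
  have XY: "preserves_AK3 ([lxi], [lyi])"
    using preserves_AK3_subst_pair[OF xY Xy] by (simp add: word_computation_simps)
  have YX: "preserves_AK3 ([lyi], [lxi])"
    using preserves_AK3_subst_pair[OF yx XY] by (simp add: word_computation_simps)
  show ?thesis
    using assms xy yx xY yX Yx Xy XY YX
    by (cases l rule: letter_cases; cases l' rule: letter_cases) simp_all
qed

definition update_letter :: "word \<times> word \<Rightarrow> letter \<Rightarrow> word \<Rightarrow> word \<times> word" where
  "update_letter \<phi> m w =
     (let u = if snd m then winv w else w in if fst m = X then (u, snd \<phi>) else (fst \<phi>, u))"

lemma subst_letter_update_letter_same [simp]: "subst_letter (update_letter \<phi> m w) m = w"
  by (cases m rule: letter_cases) (simp_all add: update_letter_def)

lemma subst_letter_update_letter_other: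
  "fst l \<noteq> fst m \<Longrightarrow> subst_letter (update_letter \<phi> m w) l = subst_letter \<phi> l"
  by (cases l rule: letter_cases; cases m rule: letter_cases) (simp_all add: update_letter_def)

definition transvection :: "letter \<Rightarrow> letter \<Rightarrow> word \<times> word" where
  "transvection m m' = update_letter ([lx], [ly]) m [m, m']"

lemma preserves_AK3_transvection:
  assumes "fst m \<noteq> fst m'"
  shows "preserves_AK3 (transvection m m')"
proof -
  note xY = preserves_AK3_invert_y and x_xY = preserves_AK3_x_to_x_inv_y
  have x_xy: "preserves_AK3 ([lx, ly], [ly])"
    using preserves_AK3_subst_pair[OF xY preserves_AK3_subst_pair[OF x_xY xY]]
    by (simp add: word_computation_simps)
  have x_Yx: "preserves_AK3 ([lyi, lx], [ly])"
    using x_xY preserves_AK3_conj_pair[of "[ly]" "([lx, lyi], [ly])"]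
    by (simp add: word_computation_simps conj_pair_def)
  have x_yx: "preserves_AK3 ([ly, lx], [ly])"
    using x_xy preserves_AK3_conj_pair[of "[lyi]" "([lx, ly], [ly])"]
    by (simp add: word_computation_simps conj_pair_def)
  \<comment> \<open>the transvections of \<open>y\<close> are the conjugates of those of \<open>x\<close> by the swap\<close>
  have swap: "preserves_AK3 (subst_pair ([ly], [lx]) (subst_pair \<phi> ([ly], [lx])))"
    if "preserves_AK3 \<phi>" for \<phi>
    using preserves_AK3_swap that by (intro preserves_AK3_subst_pair)
  show ?thesis
    using assms x_xY x_xy x_Yx x_yx swap[OF x_xY] swap[OF x_xy] swap[OF x_Yx] swap[OF x_yx]
    by (cases m rule: letter_cases; cases m' rule: letter_cases)
       (simp_all add: transvection_def update_letter_def word_computation_simps)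
qed

section \<open>Nielsen moves\<close>

lemma letter_eq_or_inv: "fst l = fst m \<Longrightarrow> l = m \<or> l = inv_letter m"
  by (cases l; cases m) (auto simp: inv_letter_def)

lemma subst_letter_id: "subst_letter ([lx], [ly]) l = [l]"
  by (cases l rule: letter_cases) (simp_all add: inv_letter_def)

definition reduced_pair :: "word \<times> word \<Rightarrow> bool" where
  "reduced_pair \<phi> \<longleftrightarrow> reduced (fst \<phi>) \<and> reduced (snd \<phi>)"

lemma reduced_subst_letter: "reduced_pair \<phi> \<Longrightarrow> reduced (subst_letter \<phi> l)"
  by (cases l rule: letter_cases) (simp_all add: reduced_pair_def)

lemma subst_pair_update_letter_transvection:
  assumes "reduced_pair \<phi>" and "fst m \<noteq> fst m'"
  shows "subst_pair (update_letter \<phi> m (wmult (subst_letter \<phi> m) (subst_letter \<phi> m')))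
           (transvection m (inv_letter m')) = \<phi>"
proof -
  let ?\<psi> = "update_letter \<phi> m (wmult (subst_letter \<phi> m) (subst_letter \<phi> m'))"
    and ?\<tau> = "transvection m (inv_letter m')"
  have m': "subst_letter ?\<psi> m' = subst_letter \<phi> m'"
    using assms(2) by (simp add: subst_letter_update_letter_other)
  have m: "subst ?\<psi> (subst_letter ?\<tau> m) = subst_letter \<phi> m"
    using assms m' by (simp add: transvection_def subst_Cons subst_letter_inv_letter
        wmult_assoc[symmetric] reduced_subst_letter)
  have "subst ?\<psi> (subst_letter ?\<tau> l) = subst_letter \<phi> l" for l
  proof (cases "fst l = fst m")
    case True
    then consider "l = m" | "l = inv_letter m"
      using letter_eq_or_inv by blast
    then show ?thesis
      using m by cases (simp_all add: subst_letter_inv_letter subst_winv)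
  next
    case False
    then show ?thesis
      using assms(1) by (simp add: transvection_def subst_letter_update_letter_other
          subst_letter_id subst_single reduced_subst_letter)
  qed
  from this[of lx] this[of ly] show ?thesis
    by (simp add: subst_pair_def prod_eq_iff)
qed

definition generating :: "word \<times> word \<Rightarrow> bool" where
  "generating \<phi> \<longleftrightarrow> {w. reduced w} \<subseteq> range (subst \<phi>)"

lemma generating_subst_pairD: "generating (subst_pair \<phi> \<psi>) \<Longrightarrow> generating \<phi>"
  unfolding generating_def by (auto simp flip: subst_subst)

lemma generating_conj_pair:
  assumes "generating \<phi>"
  shows "generating (conj_pair p \<phi>)"
  unfolding generating_def
proof (intro subsetI)
  fix z assume "z \<in> {w. reduced w}"
  moreover have "conjw (winv p) z \<in> range (subst \<phi>)"
    using assms by (auto simp: generating_def)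
  then obtain w where "subst \<phi> w = conjw (winv p) z"
    by (metis rangeE)
  ultimately have "subst (conj_pair p \<phi>) w = z"
    by (simp add: subst_conj_pair)
  then show "z \<in> range (subst (conj_pair p \<phi>))"
    by blast
qed

lemma wmult_commute_winv:
  assumes "reduced z" and "wmult e z = wmult z e"
  shows "wmult (winv e) z = wmult z (winv e)"
proof -
  have "wmult (winv e) z = wmult (winv e) (wmult (wmult z e) (winv e))"
    using assms(1) by simp
  also have "\<dots> = wmult (winv e) (wmult (wmult e z) (winv e))"
    using assms(2) by simp
  also have "\<dots> = wmult z (winv e)"
    using assms(1) by (simp add: wmult_assoc)
  finally show ?thesis .
qed

lemma subst_commute_if_cyclic:
  assumes "\<And>l. subst_letter \<chi> l \<in> {[], e, winv e}"
  shows "wmult (subst \<chi> u) (subst \<chi> v) = wmult (subst \<chi> v) (subst \<chi> u)"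
proof -
  have comm: "wmult r s = wmult s r" if "wmult r e = wmult e r"
    and "wmult r (winv e) = wmult (winv e) r" and "s \<in> {[], e, winv e}" for r s
    using that by auto
  have e: "wmult (subst \<chi> w) e = wmult e (subst \<chi> w)" for w
  proof (induction w)
    case (Cons l w)
    have "wmult (subst_letter \<chi> l) e = wmult e (subst_letter \<chi> l)"
      using assms[of l] by auto
    with Cons show ?case
      by (simp add: subst_Cons) (metis wmult_assoc)
  qed simp
  have e_inv: "wmult (subst \<chi> w) (winv e) = wmult (winv e) (subst \<chi> w)" for w
    using wmult_commute_winv[OF reduced_subst e[symmetric]] by simp
  show ?thesis
  proof (induction u)
    case (Cons l u)
    have "wmult (subst_letter \<chi> l) (subst \<chi> v) = wmult (subst \<chi> v) (subst_letter \<chi> l)"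
      using comm[OF e e_inv assms[of l]] by simp
    with Cons show ?case
      by (simp add: subst_Cons) (metis wmult_assoc)
  qed simp
qed

text \<open>If one generator is sent to the empty word, the image of the substitution is cyclic and
  hence commutative, whereas \<open>x\<close> and \<open>y\<close> do not commute.\<close>
lemma generating_nonempty:
  assumes "generating \<phi>"
  shows "fst \<phi> \<noteq> []" and "snd \<phi> \<noteq> []"
proof -
  obtain wx wy where wx: "subst \<phi> wx = [lx]" and wy: "subst \<phi> wy = [ly]"
    using assms unfolding generating_def by (metis mem_Collect_eq rangeE reduced_single subsetD)
  have noncomm: "wmult (subst \<phi> wx) (subst \<phi> wy) \<noteq> wmult (subst \<phi> wy) (subst \<phi> wx)"
    by (simp add: wx wy wmult_def reduce_def inverse_letters_def)
  show "fst \<phi> \<noteq> []"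
  proof
    assume "fst \<phi> = []"
    then have "subst_letter \<phi> l \<in> {[], snd \<phi>, winv (snd \<phi>)}" for l
      by (cases l rule: letter_cases) simp_all
    then show False
      using noncomm subst_commute_if_cyclic by blast
  qed
  show "snd \<phi> \<noteq> []"
  proof
    assume "snd \<phi> = []"
    then have "subst_letter \<phi> l \<in> {[], fst \<phi>, winv (fst \<phi>)}" for l
      by (cases l rule: letter_cases) simp_all
    then show False
      using noncomm subst_commute_if_cyclic by blast
  qed
qed

definition pair_length :: "word \<times> word \<Rightarrow> nat" where
  "pair_length \<phi> = length (fst \<phi>) + length (snd \<phi>)"

lemma pair_length_subst_letter:
  "fst m \<noteq> fst m' \<Longrightarrow> pair_length \<phi> = length (subst_letter \<phi> m) + length (subst_letter \<phi> m')"
  by (cases m rule: letter_cases; cases m' rule: letter_cases) (simp_all add: pair_length_def)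

definition nielsen_move :: "word \<Rightarrow> letter \<Rightarrow> letter \<Rightarrow> word \<times> word \<Rightarrow> word \<times> word" where
  "nielsen_move p m m' \<phi> =
     conj_pair p (update_letter \<phi> m (wmult (subst_letter \<phi> m) (subst_letter \<phi> m')))"

lemma subst_letter_conj_pair: "subst_letter (conj_pair p \<phi>) l = conjw p (subst_letter \<phi> l)"
  by (cases l rule: letter_cases) (simp_all add: conj_pair_def conjw_winv)

lemma reduced_pair_nielsen_move: "reduced_pair (nielsen_move p m m' \<phi>)"
  by (simp add: nielsen_move_def conj_pair_def reduced_pair_def conjw_def)

lemma pair_length_nielsen_move:
  assumes "fst m \<noteq> fst m'"
  shows "pair_length (nielsen_move p m m' \<phi>) =
    length (conjw p (wmult (subst_letter \<phi> m) (subst_letter \<phi> m')))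
      + length (conjw p (subst_letter \<phi> m'))"
proof -
  have "subst_letter (update_letter \<phi> m w) m' = subst_letter \<phi> m'" for w
    using assms by (simp add: subst_letter_update_letter_other)
  then show ?thesis
    unfolding pair_length_subst_letter[OF assms, of "nielsen_move p m m' \<phi>"]
    by (simp add: nielsen_move_def subst_letter_conj_pair)
qed

lemma generating_nielsen_move:
  assumes "reduced_pair \<phi>" and "fst m \<noteq> fst m'" and "generating \<phi>"
  shows "generating (nielsen_move p m m' \<phi>)"
proof -
  let ?\<psi> = "update_letter \<phi> m (wmult (subst_letter \<phi> m) (subst_letter \<phi> m'))"
  have "generating (subst_pair ?\<psi> (transvection m (inv_letter m')))"
    unfolding subst_pair_update_letter_transvection[OF assms(1,2)] by (rule assms(3))
  then have "generating ?\<psi>"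
    by (rule generating_subst_pairD)
  then show ?thesis
    unfolding nielsen_move_def by (rule generating_conj_pair)
qed

lemma preserves_AK3_nielsen_move:
  assumes "reduced_pair \<phi>" and "fst m \<noteq> fst m'" and "preserves_AK3 (nielsen_move p m m' \<phi>)"
  shows "preserves_AK3 \<phi>"
proof -
  let ?\<psi> = "update_letter \<phi> m (wmult (subst_letter \<phi> m) (subst_letter \<phi> m'))"
  have "preserves_AK3 ?\<psi>"
    using assms(3) by (simp add: nielsen_move_def preserves_AK3_conj_pair)
  moreover have "preserves_AK3 (transvection m (inv_letter m'))"
    using assms(2) by (intro preserves_AK3_transvection) (simp add: inv_letter_def)
  ultimately have "preserves_AK3 (subst_pair ?\<psi> (transvection m (inv_letter m')))"
    by (rule preserves_AK3_subst_pair)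
  then show ?thesis
    unfolding subst_pair_update_letter_transvection[OF assms(1,2)] .
qed

section \<open>Nielsen-reduced pairs\<close>

text \<open>Nielsen reducedness in the form used here: between the cancellations with its two neighbours,
  the image of each letter of a reduced word keeps at least one letter.\<close>
definition nielsen_reduced :: "word \<times> word \<Rightarrow> bool" where
  "nielsen_reduced \<phi> \<longleftrightarrow> (\<forall>l0 l l'. \<not> inverse_letters l0 l \<longrightarrow> \<not> inverse_letters l l' \<longrightarrow>
     cancellation (subst_letter \<phi> l0) (subst_letter \<phi> l)
       + cancellation (subst_letter \<phi> l) (subst_letter \<phi> l') < length (subst_letter \<phi> l))"

lemma nielsen_reducedD:
  "nielsen_reduced \<phi> \<Longrightarrow> \<not> inverse_letters l0 l \<Longrightarrow> \<not> inverse_letters l l' \<Longrightarrow>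
   cancellation (subst_letter \<phi> l0) (subst_letter \<phi> l)
     + cancellation (subst_letter \<phi> l) (subst_letter \<phi> l') < length (subst_letter \<phi> l)"
  unfolding nielsen_reduced_def by blast

lemma subst_Cons_nielsen_reduced:
  assumes \<phi>: "reduced_pair \<phi>" "nielsen_reduced \<phi>" and "reduced (l # w)"
  shows "\<exists>W. subst \<phi> (l # w) =
      take (length (subst_letter \<phi> l) -
        (case w of [] \<Rightarrow> 0 | l' # _ \<Rightarrow> cancellation (subst_letter \<phi> l) (subst_letter \<phi> l')))
        (subst_letter \<phi> l) @ W
    \<and> length w \<le> length W"
  using assms(3)
proof (induction w arbitrary: l)
  case Nil
  show ?case
    using \<phi> by (intro exI[of _ "[]"]) (simp add: subst_Cons reduced_subst_letter)
next
  case (Cons l' w)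
  let ?L = "subst_letter \<phi>"
  define c' where "c' = (case w of [] \<Rightarrow> 0 | l'' # _ \<Rightarrow> cancellation (?L l') (?L l''))"
  obtain W where W: "subst \<phi> (l' # w) = take (length (?L l') - c') (?L l') @ W"
      "length w \<le> length W"
    using Cons reduced_ConsD unfolding c'_def by blast
  define c where "c = cancellation (?L l) (?L l')"
  have ll': "\<not> inverse_letters l l'"
    using Cons.prems by simp
  have hc: "c + c' < length (?L l')"
  proof (cases w)
    case Nil
    then show ?thesis
      using nielsen_reducedD[OF \<phi>(2) ll', of l'] unfolding c_def c'_def by simp
  next
    case (Cons l'' w')
    then have "\<not> inverse_letters l' l''"
      using \<open>reduced (l # l' # w)\<close> by simp
    then show ?thesis
      using nielsen_reducedD[OF \<phi>(2) ll'] Cons unfolding c_def c'_def by simp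
  qed
  define T where "T = take (length (?L l') - c') (?L l')"
  have lT: "length T = length (?L l') - c'"
    unfolding T_def using hc by simp
  have cTW: "cancellation (?L l) (T @ W) = c"
    using hc lT unfolding T_def c_def by (simp add: cancellation_take cancellation_append)
  have rTW: "reduced (T @ W)"
    using W(1) reduced_subst[of \<phi> "l' # w"] unfolding T_def by simp
  have "subst \<phi> (l # l' # w) = wmult (?L l) (T @ W)"
    using W(1) T_def by (simp add: subst_Cons)
  also have "\<dots> = take (length (?L l) - c) (?L l) @ drop c (T @ W)"
    using wmult_cancellation[OF reduced_subst_letter[OF \<phi>(1)] rTW] cTW by simp
  also have "drop c (T @ W) = drop c T @ W"
    using hc lT by simp
  finally show ?case
    using lT hc W(2) c_def by (intro exI[of _ "drop c T @ W"]) simp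
qed

lemma length_subst_nielsen_reduced:
  assumes \<phi>: "reduced_pair \<phi>" "nielsen_reduced \<phi>" and w: "reduced w" "w \<noteq> []"
  shows "length w \<le> length (subst \<phi> w)"
proof -
  obtain l w' where lw: "w = l # w'"
    using w(2) by (cases w) auto
  let ?L = "subst_letter \<phi>"
  let ?c = "case w' of [] \<Rightarrow> 0 | l' # _ \<Rightarrow> cancellation (?L l) (?L l')"
  obtain W where W: "subst \<phi> w = take (length (?L l) - ?c) (?L l) @ W" "length w' \<le> length W"
    using subst_Cons_nielsen_reduced[OF \<phi>, of l w'] w lw by blast
  have "?c < length (?L l)"
  proof (cases w')
    case Nil
    then show ?thesis
      using nielsen_reducedD[OF \<phi>(2), of l l l] by auto
  next
    case (Cons l' w'')
    then have "\<not> inverse_letters l l'"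
      using w(1) lw by simp
    then show ?thesis
      using nielsen_reducedD[OF \<phi>(2), of l l l'] Cons by simp
  qed
  then show ?thesis
    using W lw by simp
qed

lemma winv_eq_single: "winv w = [a] \<longleftrightarrow> w = [inv_letter a]"
  by (metis inv_letter_inv_letter winv_single winv_winv)

lemma subst_letter_eq_single_if_nielsen_reduced:
  assumes \<phi>: "reduced_pair \<phi>" "nielsen_reduced \<phi>" and "generating \<phi>"
  shows "\<exists>l. subst_letter \<phi> l = [a]"
proof -
  have "[a] \<in> range (subst \<phi>)"
    using assms(3) by (auto simp: generating_def)
  then obtain w where "subst \<phi> w = [a]"
    by (metis rangeE)
  then have w: "subst \<phi> (reduce w) = [a]"
    by (simp add: subst_reduce)
  then have "reduce w \<noteq> []"
    by auto
  moreover have "length (reduce w) \<le> 1"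
    using length_subst_nielsen_reduced[OF \<phi> reduced_reduce calculation] w by simp
  ultimately obtain l where "reduce w = [l]"
    by (cases "reduce w") auto
  then show ?thesis
    using w \<phi>(1) by (metis subst_single reduce_reduced reduced_subst_letter)
qed

lemma preserves_AK3_if_nielsen_reduced:
  assumes "reduced_pair \<phi>" and "nielsen_reduced \<phi>" and "generating \<phi>"
  shows "preserves_AK3 \<phi>"
proof -
  obtain l1 l2 where "subst_letter \<phi> l1 = [lx]" and "subst_letter \<phi> l2 = [ly]"
    using subst_letter_eq_single_if_nielsen_reduced[OF assms] by metis
  then have "\<exists>l l'. \<phi> = ([l], [l']) \<and> fst l \<noteq> fst l'"
    by (cases l1 rule: letter_cases; cases l2 rule: letter_cases)
       (auto simp: winv_eq_single prod_eq_iff inv_letter_def)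
  then show ?thesis
    using preserves_AK3_signed_permutation by blast
qed

section \<open>Shortening pairs that are not Nielsen-reduced\<close>

text \<open>A word \<open>t\<close> cannot lose exactly half of its letters both against \<open>s\<close> on the left and against
  \<open>s\<inverse>\<close> on the right: the two cancelled halves would meet in a pair of inverse neighbours.\<close>
lemma half_cancellations_winv_False:
  assumes rt: "reduced t" and ne: "t \<noteq> []"
    and k1: "2 * cancellation s t = length t" and k2: "2 * cancellation t (winv s) = length t"
  shows False
proof -
  define k where "k = cancellation s t"
  have "k \<noteq> 0"
    using ne k1 k_def by (cases t) auto
  then obtain j where jk: "k = Suc j"
    using not0_implies_Suc by blast
  have ks: "k \<le> length s"
    using cancellation_le k_def by metis
  have "inverse_letters (s ! (length s - Suc j)) (t ! j)"
    using cancellation_nth[of j s t] jk k_def by simp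
  then have e1: "winv s ! j = t ! j"
    using jk ks by (simp add: winv_nth inverse_letters_iff)
  have "cancellation t (winv s) = k"
    using k1 k2 k_def by simp
  then have "inverse_letters (t ! (length t - Suc j)) (winv s ! j)"
    using cancellation_nth[of j t "winv s"] jk by simp
  moreover have "length t - Suc j = Suc j"
    using k1 k_def jk by simp
  ultimately have "inverse_letters (t ! j) (t ! Suc j)"
    using e1 inverse_letters_sym by metis
  moreover have "Suc j < length t"
    using jk k1 k_def by simp
  ultimately show False
    using rt unfolding reduced_def by blast
qed

lemma conjw_append: "reduced (p @ q) \<Longrightarrow> conjw p (p @ q) = wmult q p"
  unfolding conjw_def by (metis reduce_reduced wmult_cancel(2) wmult_def wmult_reduce(1))

text \<open>Write \<open>t = p q\<close> with \<open>|p| = |q|\<close>. The hypotheses say that \<open>s\<close> ends in \<open>p\<inverse>\<close> and starts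
  with \<open>q\<inverse>\<close>; conjugation by \<open>p\<close> turns \<open>t\<close> into \<open>q p\<close> and \<open>t s\<close> into a word of length \<open>|s| - |t|\<close>.\<close>
lemma length_conjw_half_cancellation:
  assumes rs: "reduced s" and rt: "reduced t" and ne: "t \<noteq> []"
    and k1: "2 * cancellation s t = length t" and k2: "2 * cancellation t s = length t"
    and ts: "length t \<le> length s"
  shows "length (conjw (take (cancellation s t) t) t)
      + length (conjw (take (cancellation s t) t) (wmult t s)) < length t + length s"
proof -
  define k where "k = cancellation s t"
  define p where "p = take k t"
  define q where "q = drop k t"
  define ds where "ds = drop k s"
  have tpq: "t = p @ q"
    unfolding p_def q_def by simp
  have rp: "reduced p" and rq: "reduced q"
    using rt tpq reduced_appendD1 reduced_appendD2 by metis+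
  have lp: "length p = k" and tk: "length t - k = k"
    using k1 k_def p_def by simp_all
  have "conjw p t = wmult q p"
    using conjw_append rt tpq by metis
  then have len1: "length (conjw p t) \<le> length t"
    using length_wmult[OF rq rp] tpq by simp
  have "cancellation t s = k"
    using k1 k2 k_def by simp
  then have ts_eq: "wmult t s = p @ ds"
    using wmult_cancellation[OF rt rs] tk unfolding p_def ds_def by simp
  then have rds: "reduced ds"
    using reduced_appendD2 reduced_wmult by metis
  have "conjw p (wmult t s) = wmult ds p"
    using conjw_append reduced_wmult ts_eq by metis
  moreover have "cancellation ds p = k"
  proof -
    have "cancellation ds p = inverse_prefix_length (take (length s - k) (rev s)) p"
      unfolding cancellation_def ds_def by (simp add: rev_drop)
    also have "\<dots> = min (length s - k) (min k (cancellation s t))"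
      unfolding inverse_prefix_length_take p_def cancellation_def[symmetric] cancellation_take
      by simp
    finally show ?thesis
      using k1 ts k_def by simp
  qed
  ultimately have len2: "length (conjw p (wmult t s)) = length s - 2 * k"
    using length_wmult[OF rds rp] lp ds_def by simp
  show ?thesis
    using len1 len2 k1 ts ne unfolding p_def k_def by (cases t) auto
qed

lemma subst_letter_nonempty: "fst \<phi> \<noteq> [] \<Longrightarrow> snd \<phi> \<noteq> [] \<Longrightarrow> subst_letter \<phi> l \<noteq> []"
  by (cases l rule: letter_cases) (auto simp: winv_def)

lemma length_wmult_winv: "length (wmult (winv v) (winv u)) = length (wmult u v)"
  by (metis length_winv winv_wmult)

lemma shorter_nielsen_move_if_long_cancellation:
  assumes \<phi>: "reduced_pair \<phi>" "fst \<phi> \<noteq> []" "snd \<phi> \<noteq> []" and "\<not> inverse_letters m m'"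
    and long:
      "length (subst_letter \<phi> m') < 2 * cancellation (subst_letter \<phi> m) (subst_letter \<phi> m') \<or>
       length (subst_letter \<phi> m) < 2 * cancellation (subst_letter \<phi> m) (subst_letter \<phi> m')"
  shows "\<exists>p m m'. fst m \<noteq> fst m' \<and> pair_length (nielsen_move p m m' \<phi>) < pair_length \<phi>"
proof -
  let ?L = "subst_letter \<phi>"
  have "fst m \<noteq> fst m'"
  proof
    assume "fst m = fst m'"
    then have "m = m'"
      using assms(4) eq_if_same_gen_not_inverse by blast
    then show False
      using long cancellation_self_less[OF reduced_subst_letter[OF \<phi>(1), of m']
          subst_letter_nonempty[OF \<phi>(2,3), of m']]
      by simp
  qed
  note diff = this
  then have diff': "fst (inv_letter m') \<noteq> fst (inv_letter m)"
    by (simp add: inv_letter_def)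
  have reduced: "reduced (?L l)" for l
    using reduced_subst_letter[OF \<phi>(1)] .
  have len: "length (wmult (?L m) (?L m'))
      = length (?L m) + length (?L m') - 2 * cancellation (?L m) (?L m')"
    by (simp add: length_wmult reduced)
  have le: "cancellation (?L m) (?L m') \<le> length (?L m)"
    "cancellation (?L m) (?L m') \<le> length (?L m')"
    by (rule cancellation_le)+
  consider "length (?L m') < 2 * cancellation (?L m) (?L m')"
    | "length (?L m) < 2 * cancellation (?L m) (?L m')"
    using long by blast
  then show ?thesis
  proof cases
    case 1
    then have "pair_length (nielsen_move [] m m' \<phi>) < pair_length \<phi>"
      using len le
      unfolding pair_length_nielsen_move[OF diff] pair_length_subst_letter[OF diff, of \<phi>]
      by (simp add: reduced)
    then show ?thesis
      using diff by blast
  next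
    case 2
    then have "pair_length (nielsen_move [] (inv_letter m') (inv_letter m) \<phi>) < pair_length \<phi>"
      using len le
      unfolding pair_length_nielsen_move[OF diff'] pair_length_subst_letter[OF diff, of \<phi>]
      by (simp add: length_wmult_winv reduced subst_letter_inv_letter)
    then show ?thesis
      using diff' by blast
  qed
qed

lemma length_conjw_winv: "length (conjw p (winv r)) = length (conjw p r)"
  by (simp add: conjw_winv)

text \<open>When the images of \<open>l0\<close> and \<open>l'\<close> each cancel exactly half of the image \<open>t\<close> of \<open>l\<close>, the
  letters \<open>l0\<close>, \<open>l'\<close> belong to the other generator; \<open>l' = l0\<inverse>\<close> is impossible, and for
  \<open>l' = l0\<close> the shortening comes from a conjugation.\<close>
lemma shorter_nielsen_move_if_half_cancellations:
  assumes \<phi>: "reduced_pair \<phi>" "fst \<phi> \<noteq> []" "snd \<phi> \<noteq> []"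
    and n0: "\<not> inverse_letters l0 l" and n1: "\<not> inverse_letters l l'"
    and half: "2 * cancellation (subst_letter \<phi> l0) (subst_letter \<phi> l) = length (subst_letter \<phi> l)"
      "2 * cancellation (subst_letter \<phi> l) (subst_letter \<phi> l') = length (subst_letter \<phi> l)"
      "length (subst_letter \<phi> l) \<le> length (subst_letter \<phi> l0)"
  shows "\<exists>p m m'. fst m \<noteq> fst m' \<and> pair_length (nielsen_move p m m' \<phi>) < pair_length \<phi>"
proof -
  define s t r where "s = subst_letter \<phi> l0" and "t = subst_letter \<phi> l" and "r = subst_letter \<phi> l'"
  note defs = s_def t_def r_def
  have reduced: "reduced s" "reduced t"
    unfolding defs using reduced_subst_letter[OF \<phi>(1)] by blast+
  have t: "t \<noteq> []"
    unfolding t_def using subst_letter_nonempty[OF \<phi>(2,3)] .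
  have self: "2 * cancellation t t < length t"
    using cancellation_self_less reduced t by blast
  have l0: "fst l0 \<noteq> fst l"
    using eq_if_same_gen_not_inverse[OF _ n0] self half(1) unfolding defs by force
  have l': "fst l' \<noteq> fst l"
    using eq_if_same_gen_not_inverse[OF _ n1] self half(2) unfolding defs by force
  then consider "l' = l0" | "l' = inv_letter l0"
    using letter_eq_or_inv gen_eq_if_both_differ[OF l' l0] by blast
  then show ?thesis
  proof cases
    case 1
    let ?p = "take (cancellation s t) t"
    have ts: "2 * cancellation t s = length t"
      using half(2) 1 unfolding defs by simp
    have d: "fst (inv_letter l0) \<noteq> fst (inv_letter l)"
      using l0 by (simp add: inv_letter_def)
    have "pair_length (nielsen_move ?p (inv_letter l0) (inv_letter l) \<phi>)
        = length (conjw ?p t) + length (conjw ?p (wmult t s))"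
      unfolding pair_length_nielsen_move[OF d]
      by (simp add: subst_letter_inv_letter length_conjw_winv defs flip: winv_wmult)
    also have "\<dots> < pair_length \<phi>"
      using length_conjw_half_cancellation[OF reduced t half(1)[folded defs] ts
          half(3)[folded defs]]
      by (simp add: pair_length_subst_letter[OF l0, of \<phi>] defs)
    finally show ?thesis
      using d by blast
  next
    case 2
    then have "r = winv s"
      unfolding defs by (simp add: subst_letter_inv_letter)
    then have False
      using half_cancellations_winv_False[OF reduced(2) t half(1)[folded defs]] half(2)[folded defs]
      by simp
    then show ?thesis ..
  qed
qed

lemma shorter_nielsen_move_if_not_nielsen_reduced:
  assumes \<phi>: "reduced_pair \<phi>" "fst \<phi> \<noteq> []" "snd \<phi> \<noteq> []" and "\<not> nielsen_reduced \<phi>"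
  shows "\<exists>p m m'. fst m \<noteq> fst m' \<and> pair_length (nielsen_move p m m' \<phi>) < pair_length \<phi>"
proof -
  obtain l0 l l' where n0: "\<not> inverse_letters l0 l" and n1: "\<not> inverse_letters l l'"
    and ge: "\<not> cancellation (subst_letter \<phi> l0) (subst_letter \<phi> l)
                + cancellation (subst_letter \<phi> l) (subst_letter \<phi> l') < length (subst_letter \<phi> l)"
    using assms(4) unfolding nielsen_reduced_def by blast
  define s t r where "s = subst_letter \<phi> l0" and "t = subst_letter \<phi> l" and "r = subst_letter \<phi> l'"
  consider "length t < 2 * cancellation s t \<or> length s < 2 * cancellation s t"
    | "length r < 2 * cancellation t r \<or> length t < 2 * cancellation t r"
    | "2 * cancellation s t = length t" "2 * cancellation t r = length t" "length t \<le> length s"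
    using ge unfolding s_def t_def r_def by linarith
  then show ?thesis
    unfolding s_def t_def r_def
    using shorter_nielsen_move_if_long_cancellation[OF \<phi> n0]
      shorter_nielsen_move_if_long_cancellation[OF \<phi> n1]
      shorter_nielsen_move_if_half_cancellations[OF \<phi> n0 n1]
    by cases blast+
qed

lemma preserves_AK3_if_generating:
  "reduced_pair \<phi> \<Longrightarrow> generating \<phi> \<Longrightarrow> preserves_AK3 \<phi>"
proof (induction \<phi> rule: measure_induct_rule[of pair_length])
  case (less \<phi>)
  show ?case
  proof (cases "nielsen_reduced \<phi>")
    case True
    then show ?thesis
      using less.prems preserves_AK3_if_nielsen_reduced by blast
  next
    case False
    then obtain p m m' where m: "fst m \<noteq> fst m'"
      and shorter: "pair_length (nielsen_move p m m' \<phi>) < pair_length \<phi>"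
      using shorter_nielsen_move_if_not_nielsen_reduced less.prems generating_nonempty by blast
    have "preserves_AK3 (nielsen_move p m m' \<phi>)"
      using less.IH[OF shorter reduced_pair_nielsen_move]
        generating_nielsen_move[OF less.prems(1) m less.prems(2)] by blast
    then show ?thesis
      using preserves_AK3_nielsen_move[OF less.prems(1) m] by blast
  qed
qed

lemma reduced_pair_hom_FG:
  assumes "f \<in> hom FG FG"
  shows "reduced_pair (f [lx], f [ly])"
  using assms unfolding hom_def FG_simps reduced_pair_def by (simp add: Pi_iff)

lemma generating_iso_FG:
  assumes "f \<in> iso FG FG"
  shows "generating (f [lx], f [ly])"
  unfolding generating_def
proof
  fix z assume "z \<in> {w. reduced w}"
  moreover have "f ` carrier FG = carrier FG"
    using assms by (simp add: iso_def bij_betw_def)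
  ultimately have "z \<in> f ` {w. reduced w}"
    by (simp add: FG_simps)
  then obtain w where "reduced w" and "f w = z"
    by blast
  then show "z \<in> range (subst (f [lx], f [ly]))"
    using subst_hom_FG[OF iso_imp_homomorphism[OF assms]] by (metis rangeI)
qed

theorem corollary8:
  fixes u v :: word and \<phi> :: "word \<Rightarrow> word"
  assumes "u \<in> carrier FG" and "v \<in> carrier FG"
    and "ac_equiv (u, v) AK3"
    and "\<phi> \<in> iso FG FG"
  shows "ac_equiv (\<phi> u, \<phi> v) AK3"
proof -
  let ?\<phi> = "(\<phi> [lx], \<phi> [ly])"
  have hom: "\<phi> \<in> hom FG FG"
    using assms(4) by (rule iso_imp_homomorphism)
  have "subst_pair ?\<phi> (u, v) = (\<phi> u, \<phi> v)"
    using assms(1,2) by (simp add: subst_pair_def FG_simps flip: subst_hom_FG[OF hom])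
  then have "ac_equiv (\<phi> u, \<phi> v) (subst_pair ?\<phi> AK3)"
    using ac_equiv_subst_pair[OF assms(3), of ?\<phi>] by simp
  also have "ac_equiv (subst_pair ?\<phi> AK3) AK3"
    using preserves_AK3_if_generating[OF reduced_pair_hom_FG[OF hom] generating_iso_FG[OF assms(4)]]
    unfolding preserves_AK3_def .
  finally show ?thesis .
qed

end
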